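(* Let $I$ be an $\mathfrak m$-primary ideal of $R$ and let $r>0$ be such that $\mathfrak m^r\subset I$. Then for every integer $m\ge r$, $$\dim_{\mathbf k}(R/I)=\dim_{\mathbf k}(A^{(m)}/I^{(m)}).$$
   Context: $\mathbf{k}$ is algebraically closed; $X\subset\mathbb{A}^N$ is an affine variety over $\mathbf k$ (possibly reducible) whose irreducible components all have dimension $n$, containing the origin $o$; $R=\mathcal O_{X,o}$ with maximal ideal $\mathfrak m$. $A^{(m)}\subset R$ is the set of elements of $R$ which are restrictions to $X$ of polynomials in $\mathbf k[x_1,\ldots,x_N]$ of degree $\le m$, and $I^{(m)}=A^{(m)}\cap I$. *)

theory Defs
  imports "HOL-Algebra.Ideal_Product" "HOL-Library.Extended_Nat"
begin

text \<open>Points of affine N-space over k are functions 'n => 'k with 'n a finite index type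
  (N = CARD('n)). Polynomial functions are represented by their coefficient families.\<close>

definition alg_closed_field :: "'k::field itself \<Rightarrow> bool" where
  "alg_closed_field _ \<longleftrightarrow>
     (\<forall>n>0. \<forall>c :: nat \<Rightarrow> 'k. \<exists>x. x ^ n + (\<Sum>i<n. c i * x ^ i) = 0)"

definition origin :: "'n \<Rightarrow> 'k::zero" where
  "origin = (\<lambda>_. 0)"

definition poly_le :: "nat \<Rightarrow> (('n::finite \<Rightarrow> 'k::field) \<Rightarrow> 'k) set" where
  "poly_le m = {f. \<exists>c :: ('n \<Rightarrow> nat) \<Rightarrow> 'k.
      f = (\<lambda>x. \<Sum>\<alpha>\<in>{\<alpha>. (\<Sum>i\<in>UNIV. \<alpha> i) \<le> m}. c \<alpha> * (\<Prod>i\<in>UNIV. x i ^ \<alpha> i))}"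

definition polyfuns :: "(('n::finite \<Rightarrow> 'k::field) \<Rightarrow> 'k) set" where
  "polyfuns = (\<Union>m. poly_le m)"

definition zariski_closed :: "('n::finite \<Rightarrow> 'k::field) set \<Rightarrow> bool" where
  "zariski_closed S \<longleftrightarrow> (\<exists>P \<subseteq> polyfuns. S = {x. \<forall>f\<in>P. f x = 0})"

definition irreducible_closed :: "('n::finite \<Rightarrow> 'k::field) set \<Rightarrow> bool" where
  "irreducible_closed Y \<longleftrightarrow> zariski_closed Y \<and> Y \<noteq> {} \<and>
     (\<forall>Z1 Z2. zariski_closed Z1 \<longrightarrow> zariski_closed Z2 \<longrightarrow> Y \<subseteq> Z1 \<union> Z2 \<longrightarrow>
        Y \<subseteq> Z1 \<or> Y \<subseteq> Z2)"

definition irreducible_component ::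
    "('n::finite \<Rightarrow> 'k::field) set \<Rightarrow> ('n \<Rightarrow> 'k) set \<Rightarrow> bool" where
  "irreducible_component X Y \<longleftrightarrow> Y \<subseteq> X \<and> irreducible_closed Y \<and>
     (\<forall>Z. irreducible_closed Z \<longrightarrow> Y \<subseteq> Z \<longrightarrow> Z \<subseteq> X \<longrightarrow> Z = Y)"

definition has_chain :: "('n::finite \<Rightarrow> 'k::field) set \<Rightarrow> nat \<Rightarrow> bool" where
  "has_chain Y n \<longleftrightarrow> (\<exists>Z :: nat \<Rightarrow> ('n \<Rightarrow> 'k) set.
     (\<forall>i\<le>n. irreducible_closed (Z i)) \<and> (\<forall>i<n. Z i \<subset> Z (Suc i)) \<and> Z n \<subseteq> Y)"

definition has_dim :: "('n::finite \<Rightarrow> 'k::field) set \<Rightarrow> nat \<Rightarrow> bool" where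
  "has_dim Y n \<longleftrightarrow> has_chain Y n \<and> \<not> has_chain Y (Suc n)"

definition affine_variety :: "('n::finite \<Rightarrow> 'k::field) set \<Rightarrow> bool" where
  "affine_variety X \<longleftrightarrow> zariski_closed X \<and> X \<noteq> {}"

definition pure_dim :: "('n::finite \<Rightarrow> 'k::field) set \<Rightarrow> nat \<Rightarrow> bool" where
  "pure_dim X n \<longleftrightarrow> (\<forall>Y. irreducible_component X Y \<longrightarrow> has_dim Y n)"

type_synonym ('n, 'k) frac = "(('n \<Rightarrow> 'k) \<Rightarrow> 'k) \<times> (('n \<Rightarrow> 'k) \<Rightarrow> 'k)"

definition frac_dom :: "('n::finite, 'k::field) frac set" where
  "frac_dom = {(f, g). f \<in> polyfuns \<and> g \<in> polyfuns \<and> g origin \<noteq> 0}"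

text \<open>Equality in the localization of k[X] at the maximal ideal of o.\<close>
definition frac_rel :: "('n::finite \<Rightarrow> 'k::field) set \<Rightarrow> ('n, 'k) frac \<Rightarrow> ('n, 'k) frac \<Rightarrow> bool" where
  "frac_rel X p q \<longleftrightarrow> (\<exists>h\<in>polyfuns. h origin \<noteq> 0 \<and>
      (\<forall>x\<in>X. h x * (fst p x * snd q x - fst q x * snd p x) = 0))"

definition germ :: "('n::finite \<Rightarrow> 'k::field) set \<Rightarrow> ('n, 'k) frac \<Rightarrow> ('n, 'k) frac set" where
  "germ X p = {q \<in> frac_dom. frac_rel X p q}"

definition rep :: "('n, 'k) frac set \<Rightarrow> ('n, 'k) frac" where
  "rep a = (SOME p. p \<in> a)"

definition frac_add :: "('n, 'k::field) frac \<Rightarrow> ('n, 'k) frac \<Rightarrow> ('n, 'k) frac" where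
  "frac_add p q = ((\<lambda>x. fst p x * snd q x + fst q x * snd p x), (\<lambda>x. snd p x * snd q x))"

definition frac_mult :: "('n, 'k::field) frac \<Rightarrow> ('n, 'k) frac \<Rightarrow> ('n, 'k) frac" where
  "frac_mult p q = ((\<lambda>x. fst p x * fst q x), (\<lambda>x. snd p x * snd q x))"

definition const_frac :: "'k::field \<Rightarrow> ('n, 'k) frac" where
  "const_frac c = ((\<lambda>_. c), (\<lambda>_. 1))"

text \<open>R = O_{X,o} as a ring (HOL-Algebra record); elements are germs (equivalence classes).\<close>
definition local_ring :: "('n::finite \<Rightarrow> 'k::field) set \<Rightarrow> ('n, 'k) frac set ring" where
  "local_ring X = \<lparr> carrier = germ X ` frac_dom,
      mult = (\<lambda>a b. germ X (frac_mult (rep a) (rep b))),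
      one = germ X (const_frac 1),
      zero = germ X (const_frac 0),
      add = (\<lambda>a b. germ X (frac_add (rep a) (rep b))) \<rparr>"

definition scal :: "('n::finite \<Rightarrow> 'k::field) set \<Rightarrow> 'k \<Rightarrow> ('n, 'k) frac set \<Rightarrow> ('n, 'k) frac set" where
  "scal X c a = a \<otimes>\<^bsub>local_ring X\<^esub> germ X (const_frac c)"

definition max_ideal :: "('n::finite \<Rightarrow> 'k::field) set \<Rightarrow> ('n, 'k) frac set set" where
  "max_ideal X = {germ X p | p. p \<in> frac_dom \<and> fst p origin = 0}"

text \<open>A^{(m)}: restrictions to X of polynomials of degree at most m.\<close>
definition A_deg :: "('n::finite \<Rightarrow> 'k::field) set \<Rightarrow> nat \<Rightarrow> ('n, 'k) frac set set" where
  "A_deg X m = {germ X (f, (\<lambda>_. 1)) | f. f \<in> poly_le m}"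

primrec ideal_pow :: "('a, 'b) ring_scheme \<Rightarrow> 'a set \<Rightarrow> nat \<Rightarrow> 'a set" where
  "ideal_pow R I 0 = carrier R"
| "ideal_pow R I (Suc n) = ideal_prod R (ideal_pow R I n) I"

definition radical_of :: "('a, 'b) ring_scheme \<Rightarrow> 'a set \<Rightarrow> 'a set" where
  "radical_of R I = {a \<in> carrier R. \<exists>n::nat. a [^]\<^bsub>R\<^esub> n \<in> I}"

definition primary_ideal :: "('a, 'b) ring_scheme \<Rightarrow> 'a set \<Rightarrow> bool" where
  "primary_ideal R I \<longleftrightarrow> ideal I R \<and> I \<noteq> carrier R \<and>
     (\<forall>a\<in>carrier R. \<forall>b\<in>carrier R. a \<otimes>\<^bsub>R\<^esub> b \<in> I \<longrightarrow> a \<in> I \<or> (\<exists>n::nat. b [^]\<^bsub>R\<^esub> n \<in> I))"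

definition primary_to :: "('a, 'b) ring_scheme \<Rightarrow> 'a set \<Rightarrow> 'a set \<Rightarrow> bool" where
  "primary_to R P I \<longleftrightarrow> primary_ideal R I \<and> radical_of R I = P"

text \<open>Dimension over k of the quotient V/W of k-subspaces W \<subseteq> V of R (scalar action sc):
  the least cardinality of a finite subset of V spanning V modulo W; infinity if none.\<close>
definition quot_dim :: "('a, 'b) ring_scheme \<Rightarrow> ('k \<Rightarrow> 'a \<Rightarrow> 'a) \<Rightarrow> 'a set \<Rightarrow> 'a set \<Rightarrow> enat" where
  "quot_dim R sc V W =
    (let S = {n. \<exists>B. B \<subseteq> V \<and> finite B \<and> card B = n \<and>
               (\<forall>v\<in>V. \<exists>c. v \<ominus>\<^bsub>R\<^esub> (\<Oplus>\<^bsub>R\<^esub>b\<in>B. sc (c b) b) \<in> W)}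
     in if S = {} then \<infinity> else enat (Least (\<lambda>n. n \<in> S)))"

end

theory Submission
  imports Defs
begin

text \<open>Let \<open>\<m> = max_ideal X\<close>. A germ \<open>f / g\<close> with \<open>g(o) = c \<noteq> 0\<close> is a polynomial modulo
  \<open>\<m>\<^sup>r\<close>: writing \<open>g = c (1 - u)\<close> with \<open>u(o) = 0\<close>, the truncated geometric series
  \<open>(f / c) (1 + u + \<dots> + u\<^sup>r\<^sup>-\<^sup>1)\<close> differs from \<open>f / g\<close> by \<open>f u\<^sup>r / g \<in> \<m>\<^sup>r\<close>, and its
  monomials of degree \<open>\<ge> r\<close> lie in \<open>\<m>\<^sup>r \<subseteq> I\<close>. Hence every element of \<open>R\<close> is congruent
  modulo \<open>I\<close> to an element of \<open>A = A_deg X m\<close> when \<open>m \<ge> r\<close>. A finite set spanning \<open>A\<close> modulo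
  \<open>A \<inter> I\<close> then spans \<open>R\<close> modulo \<open>I\<close>, and replacing each element of a set spanning \<open>R\<close>
  modulo \<open>I\<close> by a representative in \<open>A\<close> gives a set, no larger, spanning \<open>A\<close> modulo \<open>A \<inter> I\<close>;
  so the minimal sizes agree.\<close>

section \<open>Polynomial functions of bounded degree\<close>

definition monom :: "('n::finite \<Rightarrow> nat) \<Rightarrow> ('n \<Rightarrow> 'k::comm_semiring_1) \<Rightarrow> 'k" where
  "monom \<alpha> x = (\<Prod>i\<in>UNIV. x i ^ \<alpha> i)"

definition monom_deg :: "('n::finite \<Rightarrow> nat) \<Rightarrow> nat" where
  "monom_deg \<alpha> = (\<Sum>i\<in>UNIV. \<alpha> i)"

lemma monom_add: "monom (\<lambda>i. \<alpha> i + \<beta> i) x = monom \<alpha> x * monom \<beta> x"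
  unfolding monom_def by (simp add: power_add prod.distrib)

lemma monom_deg_add: "monom_deg (\<lambda>i. \<alpha> i + \<beta> i) = monom_deg \<alpha> + monom_deg \<beta>"
  unfolding monom_deg_def by (simp add: sum.distrib)

lemma monom_origin:
  assumes "monom_deg \<alpha> > 0"
  shows "monom \<alpha> (origin :: 'n::finite \<Rightarrow> 'k::comm_semiring_1) = 0"
proof -
  obtain i where "\<alpha> i > 0" using assms unfolding monom_deg_def by force
  thus ?thesis unfolding monom_def origin_def by (intro prod_zero) (auto intro!: exI[of _ i] zero_power)
qed

lemma finite_monom_deg_le: "finite {\<alpha>::'n::finite \<Rightarrow> nat. monom_deg \<alpha> \<le> m}"
proof (rule finite_subset)
  show "{\<alpha>::'n \<Rightarrow> nat. monom_deg \<alpha> \<le> m} \<subseteq> Pi\<^sub>E UNIV (\<lambda>_. {..m})"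
  proof
    fix \<alpha> :: "'n \<Rightarrow> nat" assume "\<alpha> \<in> {\<alpha>. monom_deg \<alpha> \<le> m}"
    hence "\<alpha> i \<le> m" for i unfolding monom_deg_def using member_le_sum[of i UNIV \<alpha>] by auto
    thus "\<alpha> \<in> Pi\<^sub>E UNIV (\<lambda>_. {..m})" by (auto simp: PiE_UNIV_domain)
  qed
  show "finite (Pi\<^sub>E (UNIV::'n set) (\<lambda>_. {..m}))" by (rule finite_PiE) auto
qed

lemma poly_le_eq:
  "poly_le m = {f. \<exists>c. f = (\<lambda>x. \<Sum>\<alpha>\<in>{\<alpha>. monom_deg \<alpha> \<le> m}. c \<alpha> * monom \<alpha> x)}"
  unfolding poly_le_def monom_deg_def monom_def by simp

lemma poly_le_sum_monom:
  fixes e :: "'a \<Rightarrow> 'n::finite \<Rightarrow> nat" and c :: "'a \<Rightarrow> 'k::field"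
  assumes "finite J" "\<And>j. j \<in> J \<Longrightarrow> monom_deg (e j) \<le> m"
  shows "(\<lambda>x. \<Sum>j\<in>J. c j * monom (e j) x) \<in> poly_le m"
proof -
  define c' where "c' \<alpha> = (\<Sum>j\<in>{j\<in>J. e j = \<alpha>}. c j)" for \<alpha>
  have "(\<lambda>x. \<Sum>j\<in>J. c j * monom (e j) x)
      = (\<lambda>x. \<Sum>\<alpha>\<in>{\<alpha>. monom_deg \<alpha> \<le> m}. c' \<alpha> * monom \<alpha> x)"
  proof
    fix x :: "'n \<Rightarrow> 'k"
    have "(\<Sum>\<alpha>\<in>{\<alpha>. monom_deg \<alpha> \<le> m}. c' \<alpha> * monom \<alpha> x)
        = (\<Sum>\<alpha>\<in>{\<alpha>. monom_deg \<alpha> \<le> m}. \<Sum>j\<in>{j\<in>J. e j = \<alpha>}. c j * monom (e j) x)"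
      unfolding c'_def sum_distrib_right by (intro sum.cong refl) auto
    also have "\<dots> = (\<Sum>j\<in>J. c j * monom (e j) x)"
      by (rule sum.group) (use assms finite_monom_deg_le in auto)
    finally show "(\<Sum>j\<in>J. c j * monom (e j) x) = (\<Sum>\<alpha>\<in>{\<alpha>. monom_deg \<alpha> \<le> m}. c' \<alpha> * monom \<alpha> x)" ..
  qed
  thus ?thesis unfolding poly_le_eq by blast
qed

lemma poly_le_mono:
  assumes "a \<le> b"
  shows "poly_le a \<subseteq> (poly_le b :: (('n::finite \<Rightarrow> 'k::field) \<Rightarrow> 'k) set)"
proof
  fix f :: "('n \<Rightarrow> 'k) \<Rightarrow> 'k" assume "f \<in> poly_le a"
  then obtain c where f: "f = (\<lambda>x. \<Sum>\<alpha>\<in>{\<alpha>. monom_deg \<alpha> \<le> a}. c \<alpha> * monom \<alpha> x)"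
    unfolding poly_le_eq by auto
  show "f \<in> poly_le b" unfolding f
    by (rule poly_le_sum_monom[where e = "\<lambda>\<alpha>. \<alpha>"]) (use finite_monom_deg_le assms in auto)
qed

lemma poly_le_add:
  assumes "f \<in> poly_le m" "g \<in> poly_le m"
  shows "(\<lambda>x. f x + g x) \<in> poly_le m"
proof -
  obtain c d where "f = (\<lambda>x. \<Sum>\<alpha>\<in>{\<alpha>. monom_deg \<alpha> \<le> m}. c \<alpha> * monom \<alpha> x)"
     "g = (\<lambda>x. \<Sum>\<alpha>\<in>{\<alpha>. monom_deg \<alpha> \<le> m}. d \<alpha> * monom \<alpha> x)"
    using assms unfolding poly_le_eq by auto
  hence "(\<lambda>x. f x + g x) = (\<lambda>x. \<Sum>\<alpha>\<in>{\<alpha>. monom_deg \<alpha> \<le> m}. (c \<alpha> + d \<alpha>) * monom \<alpha> x)"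
    by (auto simp: sum.distrib distrib_right)
  thus ?thesis unfolding poly_le_eq mem_Collect_eq by (intro exI[of _ "\<lambda>\<alpha>. c \<alpha> + d \<alpha>"])
qed

lemma poly_le_mult:
  assumes "f \<in> poly_le a" "g \<in> poly_le b"
  shows "(\<lambda>x. f x * g x) \<in> poly_le (a + b)"
proof -
  obtain c d where fg: "f = (\<lambda>x. \<Sum>\<alpha>\<in>{\<alpha>. monom_deg \<alpha> \<le> a}. c \<alpha> * monom \<alpha> x)"
     "g = (\<lambda>x. \<Sum>\<alpha>\<in>{\<alpha>. monom_deg \<alpha> \<le> b}. d \<alpha> * monom \<alpha> x)"
    using assms unfolding poly_le_eq by auto
  have "(\<lambda>x. f x * g x) = (\<lambda>x. \<Sum>p\<in>{\<alpha>. monom_deg \<alpha> \<le> a} \<times> {\<alpha>. monom_deg \<alpha> \<le> b}.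
          (c (fst p) * d (snd p)) * monom (\<lambda>i. fst p i + snd p i) x)"
    unfolding fg sum_product sum.cartesian_product monom_add
    by (auto intro!: sum.cong simp: mult_ac)
  also have "\<dots> \<in> poly_le (a + b)"
    by (rule poly_le_sum_monom) (auto simp: finite_monom_deg_le monom_deg_add)
  finally show ?thesis .
qed

lemma poly_le_monom: "monom \<alpha> \<in> (poly_le (monom_deg \<alpha>) :: (('n::finite \<Rightarrow> 'k::field) \<Rightarrow> 'k) set)"
proof -
  have "(\<lambda>x. \<Sum>j\<in>{()}. 1 * monom \<alpha> x) \<in> poly_le (monom_deg \<alpha>)"
    by (rule poly_le_sum_monom) auto
  thus ?thesis by simp
qed

lemma poly_le_const: "(\<lambda>_. a) \<in> (poly_le 0 :: (('n::finite \<Rightarrow> 'k::field) \<Rightarrow> 'k) set)"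
  using poly_le_sum_monom[of "{()}" "\<lambda>_. \<lambda>_. 0" 0 "\<lambda>_. a"]
  by (simp add: monom_def monom_deg_def)

lemma poly_le_polyfuns: "f \<in> poly_le m \<Longrightarrow> f \<in> polyfuns"
  unfolding polyfuns_def by blast

lemma polyfuns_const: "(\<lambda>_. a) \<in> polyfuns"
  using poly_le_const by (rule poly_le_polyfuns)

lemma polyfuns_monom: "monom \<alpha> \<in> polyfuns"
  using poly_le_monom by (rule poly_le_polyfuns)

lemma polyfuns_add: "f \<in> polyfuns \<Longrightarrow> g \<in> polyfuns \<Longrightarrow> (\<lambda>x. f x + g x) \<in> polyfuns"
proof -
  assume "f \<in> polyfuns" "g \<in> polyfuns"
  then obtain a b where "f \<in> poly_le a" "g \<in> poly_le b" unfolding polyfuns_def by auto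
  hence "f \<in> poly_le (max a b)" "g \<in> poly_le (max a b)"
    using poly_le_mono[of a "max a b"] poly_le_mono[of b "max a b"] by auto
  thus ?thesis unfolding polyfuns_def using poly_le_add by blast
qed

lemma polyfuns_mult: "f \<in> polyfuns \<Longrightarrow> g \<in> polyfuns \<Longrightarrow> (\<lambda>x. f x * g x) \<in> polyfuns"
  unfolding polyfuns_def using poly_le_mult by blast

lemma polyfuns_uminus: "f \<in> polyfuns \<Longrightarrow> (\<lambda>x. - f x) \<in> polyfuns"
  using polyfuns_mult[OF polyfuns_const[of "-1"]] by simp

lemma polyfuns_sum:
  "finite S \<Longrightarrow> (\<And>i. i \<in> S \<Longrightarrow> F i \<in> polyfuns) \<Longrightarrow> (\<lambda>x. \<Sum>i\<in>S. F i x) \<in> polyfuns"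
  by (induction S rule: finite_induct) (auto simp: polyfuns_const polyfuns_add)

lemma polyfuns_power: "u \<in> polyfuns \<Longrightarrow> (\<lambda>x. u x ^ k) \<in> polyfuns"
  by (induction k) (auto simp: polyfuns_const polyfuns_mult)

lemma polyfuns_sum_monom: "finite S \<Longrightarrow> (\<lambda>x. \<Sum>\<alpha>\<in>S. c \<alpha> * monom \<alpha> x) \<in> polyfuns"
  by (auto intro!: polyfuns_sum polyfuns_mult polyfuns_const polyfuns_monom)

section \<open>The local ring\<close>

lemma frac_dom_iff: "(f, g) \<in> frac_dom \<longleftrightarrow> f \<in> polyfuns \<and> g \<in> polyfuns \<and> g origin \<noteq> 0"
  unfolding frac_dom_def by simp

lemma frac_domD: "p \<in> frac_dom \<Longrightarrow> fst p \<in> polyfuns \<and> snd p \<in> polyfuns \<and> snd p origin \<noteq> 0"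
  by (cases p) (simp add: frac_dom_iff)

lemma frac_dom_poly: "f \<in> polyfuns \<Longrightarrow> (f, \<lambda>_. 1) \<in> frac_dom"
  by (simp add: frac_dom_iff polyfuns_const)

definition frac_uminus :: "('n, 'k::field) frac \<Rightarrow> ('n, 'k) frac" where
  "frac_uminus p = ((\<lambda>x. - fst p x), snd p)"

lemma frac_add_dom: "p \<in> frac_dom \<Longrightarrow> q \<in> frac_dom \<Longrightarrow> frac_add p q \<in> frac_dom"
  unfolding frac_add_def using frac_domD[of p] frac_domD[of q]
  by (simp add: frac_dom_iff polyfuns_add polyfuns_mult)

lemma frac_mult_dom: "p \<in> frac_dom \<Longrightarrow> q \<in> frac_dom \<Longrightarrow> frac_mult p q \<in> frac_dom"
  unfolding frac_mult_def using frac_domD[of p] frac_domD[of q]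
  by (simp add: frac_dom_iff polyfuns_mult)

lemma const_frac_dom: "const_frac c \<in> frac_dom"
  unfolding const_frac_def by (simp add: frac_dom_iff polyfuns_const)

lemma frac_uminus_dom: "p \<in> frac_dom \<Longrightarrow> frac_uminus p \<in> frac_dom"
  unfolding frac_uminus_def using frac_domD[of p] by (simp add: frac_dom_iff polyfuns_uminus)

lemmas frac_ops_dom = frac_add_dom frac_mult_dom const_frac_dom frac_uminus_dom
lemmas frac_ops_defs = frac_add_def frac_mult_def const_frac_def frac_uminus_def

lemma frac_relI:
  assumes "h \<in> polyfuns" "h origin \<noteq> 0"
    and "\<And>x. x \<in> X \<Longrightarrow> h x \<noteq> 0 \<Longrightarrow> fst p x * snd q x = fst q x * snd p x"
  shows "frac_rel X p q"
  unfolding frac_rel_def using assms by (intro bexI[of _ h]) auto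

lemma frac_relE:
  assumes "frac_rel X p q"
  obtains h where "h \<in> polyfuns" "h origin \<noteq> 0"
    "\<And>x. x \<in> X \<Longrightarrow> h x \<noteq> 0 \<Longrightarrow> fst p x * snd q x = fst q x * snd p x"
  using assms unfolding frac_rel_def by (metis mult_eq_0_iff right_minus_eq)

lemma frac_rel_pointwise:
  "(\<And>x. fst p x * snd q x = fst q x * snd p x) \<Longrightarrow> frac_rel X p q"
  by (rule frac_relI[of "\<lambda>_. 1"]) (auto simp: polyfuns_const)

lemma frac_rel_sym: "frac_rel X p q \<Longrightarrow> frac_rel X q p"
  by (erule frac_relE, rule frac_relI) (auto simp: mult_ac)

lemma frac_rel_trans:
  assumes pq: "frac_rel X p q" and qs: "frac_rel X q s" and q: "q \<in> frac_dom"
  shows "frac_rel X p s"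
proof -
  obtain h1 where h1: "h1 \<in> polyfuns" "h1 origin \<noteq> 0"
    "\<And>x. x \<in> X \<Longrightarrow> h1 x \<noteq> 0 \<Longrightarrow> fst p x * snd q x = fst q x * snd p x"
    by (rule frac_relE[OF pq]) blast
  obtain h2 where h2: "h2 \<in> polyfuns" "h2 origin \<noteq> 0"
    "\<And>x. x \<in> X \<Longrightarrow> h2 x \<noteq> 0 \<Longrightarrow> fst q x * snd s x = fst s x * snd q x"
    by (rule frac_relE[OF qs]) blast
  show ?thesis
  proof (rule frac_relI[where h = "\<lambda>x. h1 x * h2 x * snd q x"])
    show "(\<lambda>x. h1 x * h2 x * snd q x) \<in> polyfuns"
      using h1 h2 frac_domD[OF q] by (intro polyfuns_mult) auto
    show "h1 origin * h2 origin * snd q origin \<noteq> 0" using h1 h2 frac_domD[OF q] by auto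
    fix x assume x: "x \<in> X" "h1 x * h2 x * snd q x \<noteq> 0"
    hence e1: "fst p x * snd q x = fst q x * snd p x" and e2: "fst q x * snd s x = fst s x * snd q x"
      using h1 h2 by auto
    have "snd q x * (fst p x * snd s x) = (fst p x * snd q x) * snd s x" by (simp add: mult_ac)
    also have "\<dots> = snd p x * (fst q x * snd s x)" using e1 by (simp add: mult_ac)
    also have "\<dots> = snd q x * (fst s x * snd p x)" using e2 by (simp add: mult_ac)
    finally show "fst p x * snd s x = fst s x * snd p x" using x by simp
  qed
qed

lemma frac_rel_cong:
  assumes "frac_rel X p p'" "frac_rel X q q'"
    and "\<And>x. fst p x * snd p' x = fst p' x * snd p x \<Longrightarrow> fst q x * snd q' x = fst q' x * snd q x
         \<Longrightarrow> fst (F p q) x * snd (F p' q') x = fst (F p' q') x * snd (F p q) x"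
  shows "frac_rel X (F p q) (F p' q')"
proof -
  obtain h1 where h1: "h1 \<in> polyfuns" "h1 origin \<noteq> 0"
    "\<And>x. x \<in> X \<Longrightarrow> h1 x \<noteq> 0 \<Longrightarrow> fst p x * snd p' x = fst p' x * snd p x"
    by (rule frac_relE[OF assms(1)]) blast
  obtain h2 where h2: "h2 \<in> polyfuns" "h2 origin \<noteq> 0"
    "\<And>x. x \<in> X \<Longrightarrow> h2 x \<noteq> 0 \<Longrightarrow> fst q x * snd q' x = fst q' x * snd q x"
    by (rule frac_relE[OF assms(2)]) blast
  show ?thesis
    by (rule frac_relI[where h = "\<lambda>x. h1 x * h2 x"]) (use h1 h2 assms(3) in \<open>auto intro: polyfuns_mult\<close>)
qed

lemma cross_eq_add:
  fixes a :: "'a::comm_ring"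
  assumes "a * b' = a' * b" "c * d' = c' * d"
  shows "(a * d + c * b) * (b' * d') = (a' * d' + c' * b') * (b * d)"
proof -
  have "(a * d + c * b) * (b' * d') = (a * b') * (d * d') + (c * d') * (b * b')"
    by (simp add: algebra_simps)
  also have "\<dots> = (a' * b) * (d * d') + (c' * d) * (b * b')" using assms by simp
  also have "\<dots> = (a' * d' + c' * b') * (b * d)" by (simp add: algebra_simps)
  finally show ?thesis .
qed

lemma cross_eq_mult:
  fixes a :: "'a::comm_ring"
  assumes "a * b' = a' * b" "c * d' = c' * d"
  shows "a * c * (b' * d') = a' * c' * (b * d)"
proof -
  have "a * c * (b' * d') = (a * b') * (c * d')" by (simp add: algebra_simps)
  also have "\<dots> = (a' * b) * (c' * d)" using assms by simp
  also have "\<dots> = a' * c' * (b * d)" by (simp add: algebra_simps)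
  finally show ?thesis .
qed

lemma frac_add_cong:
  assumes "frac_rel X p p'" "frac_rel X q q'"
  shows "frac_rel X (frac_add p q) (frac_add p' q')"
  by (rule frac_rel_cong[OF assms]) (unfold frac_add_def fst_conv snd_conv, rule cross_eq_add)

lemma frac_mult_cong:
  assumes "frac_rel X p p'" "frac_rel X q q'"
  shows "frac_rel X (frac_mult p q) (frac_mult p' q')"
  by (rule frac_rel_cong[OF assms]) (unfold frac_mult_def fst_conv snd_conv, rule cross_eq_mult)

lemma germ_eq_iff: "p \<in> frac_dom \<Longrightarrow> q \<in> frac_dom \<Longrightarrow> germ X p = germ X q \<longleftrightarrow> frac_rel X p q"
proof
  assume "p \<in> frac_dom" "q \<in> frac_dom" "germ X p = germ X q"
  thus "frac_rel X p q" unfolding germ_def using frac_rel_pointwise[of q q X] by blast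
next
  assume "p \<in> frac_dom" "q \<in> frac_dom" "frac_rel X p q"
  thus "germ X p = germ X q" unfolding germ_def using frac_rel_trans frac_rel_sym by blast
qed

lemma germ_eqI: "p \<in> frac_dom \<Longrightarrow> q \<in> frac_dom \<Longrightarrow>
  (\<And>x. fst p x * snd q x = fst q x * snd p x) \<Longrightarrow> germ X p = germ X q"
  by (simp add: germ_eq_iff frac_rel_pointwise)

lemma rep_germ:
  assumes "p \<in> frac_dom"
  shows "rep (germ X p) \<in> frac_dom" "frac_rel X (rep (germ X p)) p"
proof -
  have "p \<in> germ X p" unfolding germ_def using assms by (simp add: frac_rel_pointwise)
  hence "rep (germ X p) \<in> germ X p" unfolding rep_def by (rule someI)
  thus "rep (germ X p) \<in> frac_dom" "frac_rel X (rep (germ X p)) p"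
    unfolding germ_def by (auto intro: frac_rel_sym)
qed

lemma local_ring_carrier: "carrier (local_ring X) = germ X ` frac_dom"
  by (simp add: local_ring_def)

lemma local_ring_carrierE:
  "a \<in> carrier (local_ring X) \<Longrightarrow> (\<And>p. p \<in> frac_dom \<Longrightarrow> a = germ X p \<Longrightarrow> P) \<Longrightarrow> P"
  by (auto simp: local_ring_carrier)

lemma germ_in_carrier: "p \<in> frac_dom \<Longrightarrow> germ X p \<in> carrier (local_ring X)"
  by (simp add: local_ring_carrier)

lemma local_ring_zero: "\<zero>\<^bsub>local_ring X\<^esub> = germ X (const_frac 0)"
  by (simp add: local_ring_def)

lemma local_ring_one: "\<one>\<^bsub>local_ring X\<^esub> = germ X (const_frac 1)"
  by (simp add: local_ring_def)

lemma local_ring_add: "p \<in> frac_dom \<Longrightarrow> q \<in> frac_dom \<Longrightarrow>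
   germ X p \<oplus>\<^bsub>local_ring X\<^esub> germ X q = germ X (frac_add p q)"
  by (simp add: local_ring_def germ_eq_iff frac_add_dom rep_germ frac_add_cong)

lemma local_ring_mult: "p \<in> frac_dom \<Longrightarrow> q \<in> frac_dom \<Longrightarrow>
   germ X p \<otimes>\<^bsub>local_ring X\<^esub> germ X q = germ X (frac_mult p q)"
  by (simp add: local_ring_def germ_eq_iff frac_mult_dom rep_germ frac_mult_cong)

lemmas local_ring_germ_simps =
  local_ring_zero local_ring_one local_ring_add local_ring_mult germ_in_carrier frac_ops_dom

context
  fixes p q s :: "('n::finite, 'k::field) frac"
  assumes dom: "p \<in> frac_dom" "q \<in> frac_dom" "s \<in> frac_dom"
begin

lemma germ_frac_add_assoc: "germ X (frac_add (frac_add p q) s) = germ X (frac_add p (frac_add q s))"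
  by (rule germ_eqI) (simp_all add: dom frac_ops_dom, simp add: frac_ops_defs algebra_simps)

lemma germ_frac_add_commute: "germ X (frac_add p q) = germ X (frac_add q p)"
  by (rule germ_eqI) (simp_all add: dom frac_ops_dom, simp add: frac_ops_defs algebra_simps)

lemma germ_frac_add_zero: "germ X (frac_add (const_frac 0) p) = germ X p"
  by (rule germ_eqI) (simp_all add: dom frac_ops_dom, simp add: frac_ops_defs algebra_simps)

lemma germ_frac_add_uminus: "germ X (frac_add (frac_uminus p) p) = germ X (const_frac 0)"
  by (rule germ_eqI) (simp_all add: dom frac_ops_dom, simp add: frac_ops_defs algebra_simps)

lemma germ_frac_mult_assoc: "germ X (frac_mult (frac_mult p q) s) = germ X (frac_mult p (frac_mult q s))"
  by (rule germ_eqI) (simp_all add: dom frac_ops_dom, simp add: frac_ops_defs algebra_simps)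

lemma germ_frac_mult_commute: "germ X (frac_mult p q) = germ X (frac_mult q p)"
  by (rule germ_eqI) (simp_all add: dom frac_ops_dom, simp add: frac_ops_defs algebra_simps)

lemma germ_frac_mult_one: "germ X (frac_mult (const_frac 1) p) = germ X p"
  by (rule germ_eqI) (simp_all add: dom frac_ops_dom, simp add: frac_ops_defs algebra_simps)

lemma germ_frac_distrib: "germ X (frac_mult (frac_add p q) s) = germ X (frac_add (frac_mult p s) (frac_mult q s))"
  by (rule germ_eqI) (simp_all add: dom frac_ops_dom, simp add: frac_ops_defs algebra_simps)

end

lemma cring_local_ring: "cring (local_ring X)"
proof (rule cringI)
  show "abelian_group (local_ring X)"
  proof (rule abelian_groupI)
    fix a b c
    assume "a \<in> carrier (local_ring X)" "b \<in> carrier (local_ring X)" "c \<in> carrier (local_ring X)"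
    then show "a \<oplus>\<^bsub>local_ring X\<^esub> b \<in> carrier (local_ring X)"
      and "a \<oplus>\<^bsub>local_ring X\<^esub> b \<oplus>\<^bsub>local_ring X\<^esub> c = a \<oplus>\<^bsub>local_ring X\<^esub> (b \<oplus>\<^bsub>local_ring X\<^esub> c)"
      and "a \<oplus>\<^bsub>local_ring X\<^esub> b = b \<oplus>\<^bsub>local_ring X\<^esub> a"
      and "\<zero>\<^bsub>local_ring X\<^esub> \<oplus>\<^bsub>local_ring X\<^esub> a = a"
      by (auto elim!: local_ring_carrierE simp: local_ring_germ_simps germ_frac_add_assoc
          germ_frac_add_commute[where X = X] germ_frac_add_zero)
    from \<open>a \<in> carrier (local_ring X)\<close> obtain p where p: "p \<in> frac_dom" "a = germ X p"
      by (rule local_ring_carrierE)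
    show "\<exists>y\<in>carrier (local_ring X). y \<oplus>\<^bsub>local_ring X\<^esub> a = \<zero>\<^bsub>local_ring X\<^esub>"
      using p by (intro bexI[of _ "germ X (frac_uminus p)"])
        (simp_all add: local_ring_germ_simps germ_frac_add_uminus)
  qed (simp add: local_ring_germ_simps)
next
  show "comm_monoid (local_ring X)"
  proof (rule comm_monoidI)
    fix a b c
    assume "a \<in> carrier (local_ring X)" "b \<in> carrier (local_ring X)" "c \<in> carrier (local_ring X)"
    then show "a \<otimes>\<^bsub>local_ring X\<^esub> b \<in> carrier (local_ring X)"
      and "a \<otimes>\<^bsub>local_ring X\<^esub> b \<otimes>\<^bsub>local_ring X\<^esub> c = a \<otimes>\<^bsub>local_ring X\<^esub> (b \<otimes>\<^bsub>local_ring X\<^esub> c)"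
      and "a \<otimes>\<^bsub>local_ring X\<^esub> b = b \<otimes>\<^bsub>local_ring X\<^esub> a"
      and "\<one>\<^bsub>local_ring X\<^esub> \<otimes>\<^bsub>local_ring X\<^esub> a = a"
      by (auto elim!: local_ring_carrierE simp: local_ring_germ_simps germ_frac_mult_assoc
          germ_frac_mult_commute[where X = X] germ_frac_mult_one)
  qed (simp add: local_ring_germ_simps)
next
  fix a b c
  assume "a \<in> carrier (local_ring X)" "b \<in> carrier (local_ring X)" "c \<in> carrier (local_ring X)"
  then show "(a \<oplus>\<^bsub>local_ring X\<^esub> b) \<otimes>\<^bsub>local_ring X\<^esub> c
      = a \<otimes>\<^bsub>local_ring X\<^esub> c \<oplus>\<^bsub>local_ring X\<^esub> b \<otimes>\<^bsub>local_ring X\<^esub> c"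
    by (auto elim!: local_ring_carrierE simp: local_ring_germ_simps germ_frac_distrib)
qed

section \<open>Powers of the maximal ideal\<close>

abbreviation max_ideal_pow :: "('n::finite \<Rightarrow> 'k::field) set \<Rightarrow> nat \<Rightarrow> ('n, 'k) frac set set" where
  "max_ideal_pow X k \<equiv> ideal_pow (local_ring X) (max_ideal X) k"

context
  fixes X :: "('n::finite \<Rightarrow> 'k::field) set"
begin

interpretation R: cring "local_ring X" by (rule cring_local_ring)

lemma local_ring_uminus: "p \<in> frac_dom \<Longrightarrow> \<ominus>\<^bsub>local_ring X\<^esub> germ X p = germ X (frac_uminus p)"
  by (rule R.minus_equality) (simp_all add: local_ring_germ_simps germ_frac_add_uminus)

lemma local_ring_minus: "p \<in> frac_dom \<Longrightarrow> q \<in> frac_dom \<Longrightarrow>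
   germ X p \<ominus>\<^bsub>local_ring X\<^esub> germ X q = germ X (frac_add p (frac_uminus q))"
  by (simp add: R.minus_eq local_ring_uminus local_ring_germ_simps)

lemma germ_poly_add:
  assumes "f \<in> polyfuns" "g \<in> polyfuns"
  shows "germ X (\<lambda>x. f x + g x, \<lambda>_. 1) = germ X (f, \<lambda>_. 1) \<oplus>\<^bsub>local_ring X\<^esub> germ X (g, \<lambda>_. 1)"
  using assms
  by (simp add: local_ring_add frac_dom_poly, intro germ_eqI)
     (simp_all add: frac_dom_poly polyfuns_add frac_add_dom, simp add: frac_add_def)

lemma max_ideal_pow_Suc_mult:
  assumes "germ X (f, g) \<in> max_ideal_pow X k" "(f, g) \<in> frac_dom"
    and "b \<in> polyfuns" "b origin = 0"
  shows "germ X (\<lambda>x. f x * b x, g) \<in> max_ideal_pow X (Suc k)"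
proof -
  have "germ X (\<lambda>x. f x * b x, g) = germ X (f, g) \<otimes>\<^bsub>local_ring X\<^esub> germ X (b, \<lambda>_. 1)"
    using assms by (simp add: local_ring_mult frac_dom_poly, intro germ_eqI)
      (simp_all add: frac_dom_iff polyfuns_mult frac_mult_dom frac_dom_poly frac_mult_def)
  moreover have "germ X (b, \<lambda>_. 1) \<in> max_ideal X"
    unfolding max_ideal_def using assms frac_dom_poly by auto
  ultimately show ?thesis using assms(1) by (simp add: ideal_prod.prod)
qed

lemma germ_mult_power_in_max_ideal_pow:
  assumes "u \<in> polyfuns" "u origin = 0" "g \<in> polyfuns" "g origin \<noteq> 0"
  shows "h \<in> polyfuns \<Longrightarrow> germ X (\<lambda>x. h x * u x ^ k, g) \<in> max_ideal_pow X k"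
proof (induction k arbitrary: h)
  case 0
  thus ?case using assms by (simp add: germ_in_carrier frac_dom_iff)
next
  case (Suc k)
  have "(\<lambda>x. h x * u x ^ k) \<in> polyfuns" using Suc.prems assms by (intro polyfuns_mult polyfuns_power)
  hence "germ X (\<lambda>x. (h x * u x ^ k) * u x, g) \<in> max_ideal_pow X (Suc k)"
    using Suc.IH Suc.prems assms by (intro max_ideal_pow_Suc_mult) (simp_all add: frac_dom_iff)
  thus ?case by (simp add: mult_ac)
qed

lemma germ_mult_monom_in_max_ideal_pow:
  assumes "g \<in> polyfuns" "g origin \<noteq> 0"
  shows "k \<le> monom_deg \<alpha> \<Longrightarrow> h \<in> polyfuns \<Longrightarrow> germ X (\<lambda>x. h x * monom \<alpha> x, g) \<in> max_ideal_pow X k"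
proof (induction k arbitrary: \<alpha> h)
  case 0
  thus ?case using assms by (simp add: germ_in_carrier frac_dom_iff polyfuns_mult polyfuns_monom)
next
  case (Suc k)
  then obtain i where "\<alpha> i > 0" unfolding monom_deg_def by force
  define e where "e = (\<lambda>j. if j = i then 1 else 0 :: nat)"
  define \<beta> where "\<beta> = \<alpha>(i := \<alpha> i - 1)"
  have \<alpha>: "\<alpha> = (\<lambda>j. \<beta> j + e j)" using \<open>\<alpha> i > 0\<close> unfolding \<beta>_def e_def by auto
  have "monom_deg e = 1" unfolding e_def monom_deg_def by simp
  hence "k \<le> monom_deg \<beta>" using Suc.prems(1) monom_deg_add[of \<beta> e] \<alpha> by simp
  moreover have "(\<lambda>x. h x * monom \<beta> x) \<in> polyfuns" using Suc.prems(2) by (intro polyfuns_mult polyfuns_monom)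
  ultimately have "germ X (\<lambda>x. (h x * monom \<beta> x) * monom e x, g) \<in> max_ideal_pow X (Suc k)"
    using Suc.IH Suc.prems assms \<open>monom_deg e = 1\<close>
    by (intro max_ideal_pow_Suc_mult) (simp_all add: frac_dom_iff polyfuns_monom monom_origin)
  thus ?case by (subst \<alpha>) (simp add: monom_add mult_ac)
qed

lemma germ_congruent_poly_mod_max_ideal_pow:
  assumes "a \<in> carrier (local_ring X)"
  shows "\<exists>P\<in>polyfuns. a \<ominus>\<^bsub>local_ring X\<^esub> germ X (P, \<lambda>_. 1) \<in> max_ideal_pow X r"
proof -
  obtain f g where a: "a = germ X (f, g)" and fg: "(f, g) \<in> frac_dom"
    using assms by (metis local_ring_carrierE surj_pair)
  hence f: "f \<in> polyfuns" and g: "g \<in> polyfuns" "g origin \<noteq> 0" by (simp_all add: frac_dom_iff)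
  define c where "c = g origin"
  define u where "u x = 1 + (- inverse c) * g x" for x
  have u: "u \<in> polyfuns" "u origin = 0"
     unfolding u_def[abs_def] c_def
     by (rule polyfuns_add[OF polyfuns_const polyfuns_mult[OF polyfuns_const g(1)]]) (use g(2) in simp)
  define P where "P x = inverse c * f x * (\<Sum>i<r. u x ^ i)" for x
  have P: "P \<in> polyfuns" unfolding P_def[abs_def]
    using f u by (intro polyfuns_mult polyfuns_const polyfuns_sum polyfuns_power) auto
  have geometric: "f x - P x * g x = f x * u x ^ r" for x
  proof -
    have c: "c \<noteq> 0" using g unfolding c_def by simp
    have g_eq: "g x = c * (1 - u x)" using c unfolding u_def by (simp add: field_simps)
    have "P x * g x = f x * ((1 - u x) * (\<Sum>i<r. u x ^ i))"
      unfolding P_def g_eq using c by (simp add: field_simps)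
    also have "\<dots> = f x * (1 - u x ^ r)" by (simp only: one_diff_power_eq)
    finally show ?thesis by (simp add: algebra_simps)
  qed
  have "a \<ominus>\<^bsub>local_ring X\<^esub> germ X (P, \<lambda>_. 1) = germ X (frac_add (f, g) (frac_uminus (P, \<lambda>_. 1)))"
    unfolding a using fg P by (simp add: local_ring_minus frac_dom_poly)
  also have "\<dots> = germ X (\<lambda>x. f x * u x ^ r, g)"
  proof (rule germ_eqI)
    show "frac_add (f, g) (frac_uminus (P, \<lambda>_. 1)) \<in> frac_dom"
      using fg P by (simp add: frac_ops_dom frac_dom_poly)
    show "(\<lambda>x. f x * u x ^ r, g) \<in> frac_dom"
      using f g u by (simp add: frac_dom_iff polyfuns_mult polyfuns_power)
    fix x
    have "fst (frac_add (f, g) (frac_uminus (P, \<lambda>_. 1))) x = f x * u x ^ r"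
      using geometric[of x] by (simp add: frac_add_def frac_uminus_def)
    thus "fst (frac_add (f, g) (frac_uminus (P, \<lambda>_. 1))) x * snd (\<lambda>x. f x * u x ^ r, g) x
        = fst (\<lambda>x. f x * u x ^ r, g) x * snd (frac_add (f, g) (frac_uminus (P, \<lambda>_. 1))) x"
      by (simp add: frac_add_def frac_uminus_def)
  qed
  also have "\<dots> \<in> max_ideal_pow X r"
    using u g f by (rule germ_mult_power_in_max_ideal_pow)
  finally show ?thesis using P by blast
qed

end


section \<open>Approximation by polynomials of low degree\<close>

lemma (in cring) add_minus_cancel_left: "x \<in> carrier R \<Longrightarrow> y \<in> carrier R \<Longrightarrow> x \<oplus> y \<ominus> x = y"
  by algebra

lemma (in cring) minus_add_minus:
  "x \<in> carrier R \<Longrightarrow> y \<in> carrier R \<Longrightarrow> z \<in> carrier R \<Longrightarrow> (x \<ominus> y) \<oplus> (y \<ominus> z) = x \<ominus> z"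
  by algebra

context
  fixes X :: "('n::finite \<Rightarrow> 'k::field) set" and I :: "('n, 'k) frac set set" and r :: nat
  assumes ideal_I: "ideal I (local_ring X)" and max_ideal_pow_le: "max_ideal_pow X r \<subseteq> I"
begin

interpretation R: cring "local_ring X" by (rule cring_local_ring)
interpretation I: ideal I "local_ring X" by (rule ideal_I)

lemma germ_sum_high_monom_in_ideal:
  "finite S \<Longrightarrow> (\<And>\<alpha>. \<alpha> \<in> S \<Longrightarrow> r \<le> monom_deg \<alpha>) \<Longrightarrow>
    germ X (\<lambda>x. \<Sum>\<alpha>\<in>S. c \<alpha> * monom \<alpha> x, \<lambda>_. 1) \<in> I"
proof (induction S rule: finite_induct)
  case empty
  show ?case using I.zero_closed by (simp add: local_ring_zero const_frac_def)
next
  case (insert \<beta> S)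
  have "germ X (\<lambda>x. c \<beta> * monom \<beta> x, \<lambda>_. 1) \<in> max_ideal_pow X r"
    using insert.prems by (intro germ_mult_monom_in_max_ideal_pow) (simp_all add: polyfuns_const origin_def)
  hence "germ X (\<lambda>x. c \<beta> * monom \<beta> x, \<lambda>_. 1) \<in> I" using max_ideal_pow_le by blast
  moreover have "germ X (\<lambda>x. \<Sum>\<alpha>\<in>S. c \<alpha> * monom \<alpha> x, \<lambda>_. 1) \<in> I" using insert by simp
  ultimately show ?case using insert(1,2)
    by (simp add: germ_poly_add polyfuns_mult polyfuns_const polyfuns_monom polyfuns_sum_monom)
qed

lemma poly_congruent_low_degree:
  assumes "P \<in> polyfuns"
  shows "\<exists>T\<in>poly_le r. germ X (P, \<lambda>_. 1) \<ominus>\<^bsub>local_ring X\<^esub> germ X (T, \<lambda>_. 1) \<in> I"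
proof -
  obtain N c where P: "P = (\<lambda>x. \<Sum>\<alpha>\<in>{\<alpha>. monom_deg \<alpha> \<le> N}. c \<alpha> * monom \<alpha> x)"
    using assms unfolding polyfuns_def poly_le_eq by auto
  define L where "L = {\<alpha>::'n \<Rightarrow> nat. monom_deg \<alpha> \<le> N} \<inter> {\<alpha>. monom_deg \<alpha> < r}"
  define H where "H = {\<alpha>::'n \<Rightarrow> nat. monom_deg \<alpha> \<le> N} - {\<alpha>. monom_deg \<alpha> < r}"
  define T where "T = (\<lambda>x. \<Sum>\<alpha>\<in>L. c \<alpha> * monom \<alpha> x)"
  define Q where "Q = (\<lambda>x. \<Sum>\<alpha>\<in>H. c \<alpha> * monom \<alpha> x)"
  have fin: "finite L" "finite H" unfolding L_def H_def using finite_monom_deg_le by auto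
  have T: "T \<in> poly_le r" unfolding T_def
    by (rule poly_le_sum_monom[where e = "\<lambda>\<alpha>. \<alpha>"]) (use fin in \<open>auto simp: L_def\<close>)
  have "P = (\<lambda>x. T x + Q x)"
    unfolding P T_def Q_def L_def H_def by (intro ext sum.Int_Diff finite_monom_deg_le)
  have carrier: "germ X (T, \<lambda>_. 1) \<in> carrier (local_ring X)" "germ X (Q, \<lambda>_. 1) \<in> carrier (local_ring X)"
    using T fin by (simp_all add: germ_in_carrier frac_dom_poly poly_le_polyfuns Q_def polyfuns_sum_monom)
  have "germ X (P, \<lambda>_. 1) = germ X (T, \<lambda>_. 1) \<oplus>\<^bsub>local_ring X\<^esub> germ X (Q, \<lambda>_. 1)"
    using \<open>P = (\<lambda>x. T x + Q x)\<close> T fin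
    by (simp add: germ_poly_add poly_le_polyfuns Q_def polyfuns_sum_monom)
  hence "germ X (P, \<lambda>_. 1) \<ominus>\<^bsub>local_ring X\<^esub> germ X (T, \<lambda>_. 1) = germ X (Q, \<lambda>_. 1)"
    using carrier by (simp add: R.add_minus_cancel_left)
  moreover have "germ X (Q, \<lambda>_. 1) \<in> I" unfolding Q_def
    using fin by (intro germ_sum_high_monom_in_ideal) (auto simp: H_def)
  ultimately have "germ X (P, \<lambda>_. 1) \<ominus>\<^bsub>local_ring X\<^esub> germ X (T, \<lambda>_. 1) \<in> I" by simp
  with T show ?thesis by blast
qed

lemma germ_congruent_low_degree_poly:
  assumes "a \<in> carrier (local_ring X)"
  shows "\<exists>T\<in>poly_le r. a \<ominus>\<^bsub>local_ring X\<^esub> germ X (T, \<lambda>_. 1) \<in> I"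
proof -
  obtain P where P: "P \<in> polyfuns" "a \<ominus>\<^bsub>local_ring X\<^esub> germ X (P, \<lambda>_. 1) \<in> max_ideal_pow X r"
    using germ_congruent_poly_mod_max_ideal_pow[OF assms] by blast
  obtain T where T: "T \<in> poly_le r" "germ X (P, \<lambda>_. 1) \<ominus>\<^bsub>local_ring X\<^esub> germ X (T, \<lambda>_. 1) \<in> I"
    using poly_congruent_low_degree[OF P(1)] by blast
  have "a \<ominus>\<^bsub>local_ring X\<^esub> germ X (T, \<lambda>_. 1)
      = (a \<ominus>\<^bsub>local_ring X\<^esub> germ X (P, \<lambda>_. 1)) \<oplus>\<^bsub>local_ring X\<^esub>
        (germ X (P, \<lambda>_. 1) \<ominus>\<^bsub>local_ring X\<^esub> germ X (T, \<lambda>_. 1))"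
    using assms P(1) T(1)
    by (simp add: R.minus_add_minus germ_in_carrier frac_dom_poly poly_le_polyfuns)
  also have "\<dots> \<in> I" using P(2) T(2) max_ideal_pow_le by auto
  finally show ?thesis using T(1) by blast
qed

end


section \<open>Quotient dimension\<close>

definition spans_mod :: "('a, 'b) ring_scheme \<Rightarrow> ('k \<Rightarrow> 'a \<Rightarrow> 'a) \<Rightarrow> 'a set \<Rightarrow> 'a set \<Rightarrow> 'a set \<Rightarrow> bool" where
  "spans_mod R sc V W B \<longleftrightarrow> B \<subseteq> V \<and> finite B \<and> (\<forall>v\<in>V. \<exists>c. v \<ominus>\<^bsub>R\<^esub> (\<Oplus>\<^bsub>R\<^esub>b\<in>B. sc (c b) b) \<in> W)"

lemma quot_dim_eqI:
  assumes "\<And>B. spans_mod R sc V' W' B \<Longrightarrow> spans_mod R sc V W B"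
    and "\<And>B. spans_mod R sc V W B \<Longrightarrow> \<exists>B'. spans_mod R sc V' W' B' \<and> card B' \<le> card B"
  shows "quot_dim R sc V W = quot_dim R sc V' W'"
proof -
  define S where "S = {n. \<exists>B. spans_mod R sc V W B \<and> card B = n}"
  define S' where "S' = {n. \<exists>B. spans_mod R sc V' W' B \<and> card B = n}"
  have "quot_dim R sc V W = (if S = {} then \<infinity> else enat (LEAST n. n \<in> S))"
    "quot_dim R sc V' W' = (if S' = {} then \<infinity> else enat (LEAST n. n \<in> S'))"
    unfolding quot_dim_def Let_def S_def S'_def spans_mod_def by (simp_all only: conj_ac)
  moreover have sub: "S' \<subseteq> S" unfolding S_def S'_def using assms(1) by blast
  moreover have "S' = {} \<Longrightarrow> S = {}" unfolding S_def S'_def using assms(2) by blast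
  moreover have "(LEAST n. n \<in> S') = (LEAST n. n \<in> S)" if "S \<noteq> {}"
  proof (rule Least_equality)
    define n where "n = (LEAST n. n \<in> S)"
    have "n \<in> S" using that unfolding n_def by (auto intro: LeastI)
    then obtain n' where "n' \<in> S'" "n' \<le> n" unfolding S_def S'_def using assms(2) by blast
    moreover have "n \<le> n'" using \<open>n' \<in> S'\<close> sub unfolding n_def by (auto intro: Least_le)
    ultimately show "n \<in> S'" by simp
    show "\<And>k. k \<in> S' \<Longrightarrow> n \<le> k" using sub unfolding n_def by (auto intro: Least_le)
  qed
  ultimately show ?thesis by auto
qed

lemma (in abelian_group) finsum_in_additive_subgroup:
  assumes "additive_subgroup H G" "finite F" "\<And>i. i \<in> F \<Longrightarrow> f i \<in> H"
  shows "finsum G f F \<in> H"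
  using assms(2,3)
proof (induction F rule: finite_induct)
  case empty
  thus ?case using additive_subgroup.zero_closed[OF assms(1)] by simp
next
  case (insert i F)
  have "f \<in> F \<rightarrow> carrier G" "f i \<in> carrier G"
    using insert.prems additive_subgroup.a_subset[OF assms(1)] by auto
  thus ?case using insert additive_subgroup.a_closed[OF assms(1)] by (simp add: finsum_insert)
qed

lemma (in cring) minus_mult_add_cancel:
  "b \<in> carrier R \<Longrightarrow> a \<in> carrier R \<Longrightarrow> k \<in> carrier R \<Longrightarrow> (b \<ominus> a) \<otimes> k \<oplus> a \<otimes> k = b \<otimes> k"
  by algebra

lemma (in cring) minus_add_cancel_right:
  "v \<in> carrier R \<Longrightarrow> y \<in> carrier R \<Longrightarrow> z \<in> carrier R \<Longrightarrow> (v \<ominus> (y \<oplus> z)) \<oplus> y = v \<ominus> z"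
  by algebra

locale cring_scalars = cring +
  fixes scalar :: "'c::comm_monoid_add \<Rightarrow> 'a"
  assumes scalar_closed [simp]: "scalar c \<in> carrier R"
    and scalar_add: "scalar (c + d) = scalar c \<oplus> scalar d"
    and scalar_zero: "scalar 0 = \<zero>"
begin

lemma scalar_sum: "finite F \<Longrightarrow> scalar (\<Sum>i\<in>F. c i) = (\<Oplus>i\<in>F. scalar (c i))"
  by (induction F rule: finite_induct) (simp_all add: scalar_zero scalar_add finsum_insert Pi_def)

lemma finsum_scale_image:
  assumes "finite B" "\<phi> ` B \<subseteq> carrier R"
  shows "(\<Oplus>b\<in>B. \<phi> b \<otimes> scalar (c b)) = (\<Oplus>b'\<in>\<phi> ` B. b' \<otimes> scalar (\<Sum>b\<in>{b\<in>B. \<phi> b = b'}. c b))"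
proof -
  have "(\<Oplus>b\<in>B. \<phi> b \<otimes> scalar (c b)) = (\<Oplus>b'\<in>\<phi> ` B. \<Oplus>b\<in>{b\<in>B. \<phi> b = b'}. \<phi> b \<otimes> scalar (c b))"
  proof -
    have "B = (\<Union>b'\<in>\<phi> ` B. {b\<in>B. \<phi> b = b'})" by auto
    thus ?thesis using assms
      by (subst (1) \<open>B = _\<close>, intro add.finprod_UN_disjoint) (auto simp: pairwise_def disjnt_def)
  qed
  also have "\<dots> = (\<Oplus>b'\<in>\<phi> ` B. b' \<otimes> scalar (\<Sum>b\<in>{b\<in>B. \<phi> b = b'}. c b))"
  proof (rule finsum_cong')
    fix b' assume b': "b' \<in> \<phi> ` B"
    hence "(\<Oplus>b\<in>{b\<in>B. \<phi> b = b'}. \<phi> b \<otimes> scalar (c b)) = (\<Oplus>b\<in>{b\<in>B. \<phi> b = b'}. b' \<otimes> scalar (c b))"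
      using assms by (intro finsum_cong') auto
    also have "\<dots> = b' \<otimes> scalar (\<Sum>b\<in>{b\<in>B. \<phi> b = b'}. c b)"
      using b' assms by (simp add: finsum_rdistr[of _ b'] scalar_sum Pi_def subset_iff)
    finally show "(\<Oplus>b\<in>{b\<in>B. \<phi> b = b'}. \<phi> b \<otimes> scalar (c b)) = b' \<otimes> scalar (\<Sum>b\<in>{b\<in>B. \<phi> b = b'}. c b)" .
  qed (use assms in auto)
  finally show ?thesis .
qed

context
  fixes I A :: "'a set"
  assumes ideal_I: "ideal I R" and subgroup_A: "additive_subgroup A R"
    and A_scale_closed: "\<And>x c. x \<in> A \<Longrightarrow> x \<otimes> scalar c \<in> A"
    and A_represents: "\<And>a. a \<in> carrier R \<Longrightarrow> \<exists>b\<in>A. a \<ominus> b \<in> I"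
begin

interpretation I: ideal I R by (rule ideal_I)
interpretation A: additive_subgroup A R by (rule subgroup_A)

lemma spans_mod_carrier_if_spans_mod_subgroup:
  assumes "spans_mod R (\<lambda>c x. x \<otimes> scalar c) A (A \<inter> I) B"
  shows "spans_mod R (\<lambda>c x. x \<otimes> scalar c) (carrier R) I B"
  unfolding spans_mod_def
proof (intro conjI ballI)
  show "B \<subseteq> carrier R" "finite B" using assms A.a_subset unfolding spans_mod_def by auto
  fix v assume v: "v \<in> carrier R"
  obtain b0 where b0: "b0 \<in> A" "v \<ominus> b0 \<in> I" using A_represents[OF v] by blast
  obtain c where c: "b0 \<ominus> (\<Oplus>b\<in>B. b \<otimes> scalar (c b)) \<in> A \<inter> I"
    using assms b0(1) unfolding spans_mod_def by blast
  have "(\<Oplus>b\<in>B. b \<otimes> scalar (c b)) \<in> carrier R" using \<open>B \<subseteq> carrier R\<close> by (intro finsum_closed) auto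
  hence "v \<ominus> (\<Oplus>b\<in>B. b \<otimes> scalar (c b)) = (v \<ominus> b0) \<oplus> (b0 \<ominus> (\<Oplus>b\<in>B. b \<otimes> scalar (c b)))"
    using v b0(1) A.a_subset by (simp add: minus_add_minus subsetD)
  also have "\<dots> \<in> I" using b0(2) c by auto
  finally show "\<exists>c. v \<ominus> (\<Oplus>b\<in>B. b \<otimes> scalar (c b)) \<in> I" by blast
qed

lemma spans_mod_subgroup_image:
  assumes B: "spans_mod R (\<lambda>c x. x \<otimes> scalar c) (carrier R) I B"
    and \<phi>: "\<And>b. b \<in> B \<Longrightarrow> \<phi> b \<in> A \<and> b \<ominus> \<phi> b \<in> I"
  shows "spans_mod R (\<lambda>c x. x \<otimes> scalar c) A (A \<inter> I) (\<phi> ` B)"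
  unfolding spans_mod_def
proof (intro conjI ballI)
  have B_carrier: "B \<subseteq> carrier R" and fin: "finite B" using B unfolding spans_mod_def by auto
  have \<phi>_carrier: "\<phi> ` B \<subseteq> carrier R" using \<phi> A.a_subset by auto
  show "\<phi> ` B \<subseteq> A" "finite (\<phi> ` B)" using \<phi> fin by auto
  fix v assume v: "v \<in> A"
  then obtain c where c: "v \<ominus> (\<Oplus>b\<in>B. b \<otimes> scalar (c b)) \<in> I"
    using B A.a_subset unfolding spans_mod_def by blast
  define c' where "c' b' = (\<Sum>b\<in>{b\<in>B. \<phi> b = b'}. c b)" for b'
  define low where "low = (\<Oplus>b\<in>B. \<phi> b \<otimes> scalar (c b))"
  define err where "err = (\<Oplus>b\<in>B. (b \<ominus> \<phi> b) \<otimes> scalar (c b))"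
  have low: "low = (\<Oplus>b'\<in>\<phi> ` B. b' \<otimes> scalar (c' b'))"
    unfolding low_def c'_def using fin \<phi>_carrier by (rule finsum_scale_image)
  have "low \<in> A" unfolding low_def using fin \<phi> A_scale_closed
    by (intro finsum_in_additive_subgroup[OF subgroup_A]) auto
  have "err \<in> I" unfolding err_def using fin \<phi> B_carrier
    by (intro finsum_in_additive_subgroup[OF I.is_additive_subgroup]) (auto intro: I.I_r_closed)
  have "(\<Oplus>b\<in>B. b \<otimes> scalar (c b)) = (\<Oplus>b\<in>B. (b \<ominus> \<phi> b) \<otimes> scalar (c b) \<oplus> \<phi> b \<otimes> scalar (c b))"
    using B_carrier \<phi>_carrier by (intro finsum_cong') (auto simp: minus_mult_add_cancel subset_iff)
  also have "\<dots> = err \<oplus> low"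
    unfolding err_def low_def using B_carrier \<phi>_carrier by (intro finsum_addf) (auto simp: subset_iff)
  finally have "(\<Oplus>b\<in>B. b \<otimes> scalar (c b)) = err \<oplus> low" .
  hence "v \<ominus> low = (v \<ominus> (\<Oplus>b\<in>B. b \<otimes> scalar (c b))) \<oplus> err"
    using v \<open>low \<in> A\<close> \<open>err \<in> I\<close> A.a_subset I.a_subset by (simp add: minus_add_cancel_right subsetD)
  also have "\<dots> \<in> I" using c \<open>err \<in> I\<close> by simp
  finally have "v \<ominus> low \<in> A \<inter> I"
    using v \<open>low \<in> A\<close> by (simp add: minus_eq A.a_closed A.a_inv_closed)
  thus "\<exists>c. v \<ominus> (\<Oplus>b\<in>\<phi> ` B. b \<otimes> scalar (c b)) \<in> A \<inter> I" unfolding low by blast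
qed

lemma quot_dim_eq_subgroup:
  "quot_dim R (\<lambda>c x. x \<otimes> scalar c) (carrier R) I = quot_dim R (\<lambda>c x. x \<otimes> scalar c) A (A \<inter> I)"
proof (rule quot_dim_eqI)
  fix B assume B: "spans_mod R (\<lambda>c x. x \<otimes> scalar c) (carrier R) I B"
  hence "\<forall>b\<in>B. \<exists>a. a \<in> A \<and> b \<ominus> a \<in> I" using A_represents unfolding spans_mod_def by blast
  then obtain \<phi> where "\<And>b. b \<in> B \<Longrightarrow> \<phi> b \<in> A \<and> b \<ominus> \<phi> b \<in> I" by metis
  moreover have "card (\<phi> ` B) \<le> card B" using B unfolding spans_mod_def by (simp add: card_image_le)
  ultimately show "\<exists>B'. spans_mod R (\<lambda>c x. x \<otimes> scalar c) A (A \<inter> I) B' \<and> card B' \<le> card B"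
    using spans_mod_subgroup_image[OF B] by blast
qed (rule spans_mod_carrier_if_spans_mod_subgroup)

end

end


lemma cring_scalars_local_ring:
  fixes X :: "('n::finite \<Rightarrow> 'k::field) set"
  shows "cring_scalars (local_ring X) (\<lambda>c. germ X (const_frac c))"
proof (rule cring_scalars.intro[OF cring_local_ring], unfold_locales)
  fix c d :: 'k
  show "germ X (const_frac c) \<in> carrier (local_ring X)" by (simp add: local_ring_germ_simps)
  show "germ X (const_frac (c + d)) = germ X (const_frac c) \<oplus>\<^bsub>local_ring X\<^esub> germ X (const_frac d)"
    by (simp add: local_ring_germ_simps, rule germ_eqI) (simp_all add: frac_ops_dom, simp add: frac_ops_defs)
qed (simp add: local_ring_zero)

context
  fixes X :: "('n::finite \<Rightarrow> 'k::field) set"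
begin

interpretation R: cring "local_ring X" by (rule cring_local_ring)

lemma A_degE:
  assumes "a \<in> A_deg X m"
  obtains f where "f \<in> poly_le m" "f \<in> polyfuns" "a = germ X (f, \<lambda>_. 1)"
  using assms unfolding A_deg_def by (auto intro: poly_le_polyfuns)

lemma A_degI: "f \<in> poly_le m \<Longrightarrow> germ X (f, \<lambda>_. 1) \<in> A_deg X m"
  unfolding A_deg_def by blast

lemma A_deg_additive_subgroup: "additive_subgroup (A_deg X m) (local_ring X)"
proof (rule additive_subgroupI, rule R.add.subgroupI)
  show "A_deg X m \<subseteq> carrier (local_ring X)"
    by (auto elim!: A_degE simp: germ_in_carrier frac_dom_poly)
  have "(\<lambda>_. 0) \<in> (poly_le m :: (('n \<Rightarrow> 'k) \<Rightarrow> 'k) set)"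
    using poly_le_mono[of 0 m] poly_le_const by blast
  thus "A_deg X m \<noteq> {}" by (auto dest: A_degI)
next
  fix a b assume "a \<in> A_deg X m" "b \<in> A_deg X m"
  then obtain f g where f: "f \<in> poly_le m" "f \<in> polyfuns" "a = germ X (f, \<lambda>_. 1)"
    and g: "g \<in> poly_le m" "g \<in> polyfuns" "b = germ X (g, \<lambda>_. 1)"
    by (elim A_degE)
  have "a \<oplus>\<^bsub>local_ring X\<^esub> b = germ X (\<lambda>x. f x + g x, \<lambda>_. 1)"
    using f g by (simp add: germ_poly_add)
  thus "a \<oplus>\<^bsub>local_ring X\<^esub> b \<in> A_deg X m"
    using poly_le_add[OF f(1) g(1)] by (simp add: A_degI)
  have "\<ominus>\<^bsub>local_ring X\<^esub> a = germ X (frac_uminus (f, \<lambda>_. 1))"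
    using f by (simp add: local_ring_uminus frac_dom_poly)
  moreover have "(\<lambda>x. - f x) \<in> poly_le m" using poly_le_mult[OF poly_le_const[of "-1"] f(1)] by simp
  ultimately show "\<ominus>\<^bsub>local_ring X\<^esub> a \<in> A_deg X m"
    by (simp add: frac_uminus_def A_degI)
qed

lemma A_deg_scale_closed:
  assumes "a \<in> A_deg X m"
  shows "a \<otimes>\<^bsub>local_ring X\<^esub> germ X (const_frac c) \<in> A_deg X m"
proof -
  obtain f where f: "f \<in> poly_le m" "f \<in> polyfuns" "a = germ X (f, \<lambda>_. 1)"
    using assms by (rule A_degE)
  have "a \<otimes>\<^bsub>local_ring X\<^esub> germ X (const_frac c) = germ X (\<lambda>x. f x * c, \<lambda>_. 1)"
    using f by (simp add: local_ring_mult frac_dom_poly const_frac_dom)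
      (simp add: frac_mult_def const_frac_def)
  moreover have "(\<lambda>x. f x * c) \<in> poly_le m" using poly_le_mult[OF f(1) poly_le_const[of c]] by simp
  ultimately show ?thesis by (simp add: A_degI)
qed

end

theorem proposition2p3:
  fixes X :: "('n::finite \<Rightarrow> 'k::field) set"
    and n :: nat and I :: "('n, 'k) frac set set" and r :: nat
  assumes "alg_closed_field TYPE('k)"
    and "affine_variety X" and "pure_dim X n" and "origin \<in> X"
    and "primary_to (local_ring X) (max_ideal X) I"
    and "r > 0" and "ideal_pow (local_ring X) (max_ideal X) r \<subseteq> I"
  shows "\<forall>m::nat. m \<ge> r \<longrightarrow>
     quot_dim (local_ring X) (scal X) (carrier (local_ring X)) I
       = quot_dim (local_ring X) (scal X) (A_deg X m) (A_deg X m \<inter> I)"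
proof (intro allI impI)
  fix m :: nat assume "r \<le> m"
  interpret cring_scalars "local_ring X" "\<lambda>c. germ X (const_frac c)"
    by (rule cring_scalars_local_ring)
  have I: "ideal I (local_ring X)" using assms(5) unfolding primary_to_def primary_ideal_def by blast
  have "scal X = (\<lambda>c a. a \<otimes>\<^bsub>local_ring X\<^esub> germ X (const_frac c))" by (simp add: fun_eq_iff scal_def)
  moreover have "\<exists>b\<in>A_deg X m. a \<ominus>\<^bsub>local_ring X\<^esub> b \<in> I" if "a \<in> carrier (local_ring X)" for a
    using germ_congruent_low_degree_poly[OF I assms(7) that] poly_le_mono[OF \<open>r \<le> m\<close>]
    by (blast intro: A_degI)
  ultimately show "quot_dim (local_ring X) (scal X) (carrier (local_ring X)) I
       = quot_dim (local_ring X) (scal X) (A_deg X m) (A_deg X m \<inter> I)"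
    using quot_dim_eq_subgroup[OF I A_deg_additive_subgroup A_deg_scale_closed] by simp
qed

end
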